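(* Fix $-1<\xi_1<\xi_2<\xi_3<1$. As $(s,t)\to(0,0)$ with $s,t>0$, $$Q(s,t)-Q(0,0)=\frac{-1}{2\sqrt{1-\xi_2}\sqrt{1+\xi_2}\sqrt{\xi_3-\xi_2}}\,t\ln\frac1t+\frac{1}{2\sqrt{1-\xi_1}\sqrt{1+\xi_1}\sqrt{\xi_3-\xi_1}}\,s\ln\frac1s$$ $$\qquad+o\!\left(s\ln\frac1s\right)+o\!\left(t\ln\frac1t\right)+O(t)\,s\ln\frac1s+O\!\left(\frac{1}{\ln\frac1s}\right)t\ln\frac1t.$$
   Context: Fix $-1<\xi_1<\xi_2<\xi_3<1$. For real $y$, $\sqrt y$ denotes the principal branch: $\sqrt y\ge0$ for $y\ge0$ and $\sqrt y=i\sqrt{|y|}$ for $y<0$. For small $s,t\ge 0$ let $$g_{s,t}(x)=\frac{\sqrt{x-\xi_1+s}\,\sqrt{x-\xi_2+t}}{\sqrt{x-1}\sqrt{x+1}\sqrt{x-\xi_1}\sqrt{x-\xi_2}\sqrt{x-\xi_3}},$$ and define $A(s,t)=-i\int_{-\infty}^{-1}g_{s,t}\,dx$, $B(s,t)=-i\int_{\xi_1-s}^{\xi_1}g_{s,t}\,dx$, $C(s,t)=-i\int_{\xi_2-t}^{\xi_2}g_{s,t}\,dx$, $P(s,t)=-\int_{\xi_2}^{\xi_3}g_{s,t}\,dx$, $Q(s,t)=-\int_{\xi_1}^{\xi_2-t}g_{s,t}\,dx$, and $1/J(s,t)=\int_1^{\infty}g_{s,t}\,dx$ (all these are real). Notation: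 $h=O(g)$ means $|h/g|$ is bounded near $(0,0)$, and $h=o(g)$ means $h/g\to0$ as $(s,t)\to(0,0)$. *)

theory Defs
  imports "HOL-Analysis.Analysis"
begin

text \<open>Principal square root of a real number, as a complex number:
  csqrt y = sqrt y for y \<ge> 0 and csqrt y = i sqrt |y| for y < 0.\<close>
definition psqrt :: "real \<Rightarrow> complex" where
  "psqrt y = csqrt (complex_of_real y)"

definition gfun :: "real \<Rightarrow> real \<Rightarrow> real \<Rightarrow> real \<Rightarrow> real \<Rightarrow> real \<Rightarrow> complex" where
  "gfun \<xi>1 \<xi>2 \<xi>3 s t x =
     (psqrt (x - \<xi>1 + s) * psqrt (x - \<xi>2 + t)) /
     (psqrt (x - 1) * psqrt (x + 1) * psqrt (x - \<xi>1) * psqrt (x - \<xi>2) * psqrt (x - \<xi>3))"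

definition Qfun :: "real \<Rightarrow> real \<Rightarrow> real \<Rightarrow> real \<Rightarrow> real \<Rightarrow> complex" where
  "Qfun \<xi>1 \<xi>2 \<xi>3 s t = - integral {\<xi>1..\<xi>2 - t} (gfun \<xi>1 \<xi>2 \<xi>3 s t)"

end

(*
  On (xi1, xi2 - t) the integrand factors as g_{s,t} = - w * a_s * b_t, with the weight
  w x = 1 / sqrt ((1 - x) (1 + x) (xi3 - x)), smooth on [xi1, xi2], and
  a_s x = sqrt (x - xi1 + s) / sqrt (x - xi1),  b_t x = sqrt (xi2 - t - x) / sqrt (xi2 - x).
  Expanding w a b - w = w (a - 1) + w (b - 1) + w (a - 1) (b - 1) gives

    Q(s,t) - Q(0,0) = int w (a - 1) + int w (b - 1) + int w (a - 1) (b - 1) - int_{xi2-t}^{xi2} w.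

  Both a_s - 1 and b_t - 1 have elementary antiderivatives; their boundary values at the branch
  points produce (s/2) ln (1/s) and -(t/2) ln (1/t), up to O(s) and O(t). Freezing w at xi1,
  resp. xi2, costs only O(s), resp. O(t), because w is Lipschitz while (x - xi1)(a_s - 1) <= s/2
  and (xi2 - x)(1 - b_t) <= t. The cross term is O(s + t): on each half of the interval one of
  its two factors is uniformly small. Finally O(s + t) = o(s ln (1/s)) + o(t ln (1/t)), so the
  error terms O(t) s ln (1/s) and O(1/ln (1/s)) t ln (1/t) admitted by the statement vanish here.
*)

theory Submission
  imports Defs
begin

lemma lipschitz_on_if_continuous_derivative:
  fixes f f' :: "real \<Rightarrow> real"
  assumes deriv: "\<And>x. x \<in> {a..b} \<Longrightarrow> (f has_real_derivative f' x) (at x)"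
    and cont: "continuous_on {a..b} f'"
  shows "\<exists>L. L-lipschitz_on {a..b} f"
proof -
  obtain B where B: "\<And>x. x \<in> {a..b} \<Longrightarrow> norm (f' x) \<le> B"
    using compact_imp_bounded[OF compact_continuous_image[OF cont compact_Icc]]
    by (meson bounded_iff imageI)
  have "(max 0 B)-lipschitz_on {a..b} f"
  proof (rule lipschitz_onI)
    fix x y assume "x \<in> {a..b}" "y \<in> {a..b}"
    moreover have "\<And>z. z \<in> {a..b} \<Longrightarrow> (f has_field_derivative f' z) (at z within {a..b})"
      using deriv has_field_derivative_at_within by blast
    ultimately have "norm (f x - f y) \<le> B * norm (x - y)"
      by (intro field_differentiable_bound[of "{a..b}" f f' B]) (use B in auto)
    then show "dist (f x) (f y) \<le> max 0 B * dist x y"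
      by (simp add: dist_norm) (smt (verit) mult_right_mono abs_ge_zero)
  qed simp
  then show ?thesis ..
qed

lemma norm_integral_le_integral_Ioo:
  fixes f :: "real \<Rightarrow> 'a::banach"
  assumes "f integrable_on {a..b}" "g integrable_on {a..b}"
    and "\<And>x. x \<in> {a<..<b} \<Longrightarrow> norm (f x) \<le> g x"
  shows "norm (integral {a..b} f) \<le> integral {a..b} g"
proof -
  have "(f has_integral integral {a..b} f) {a<..<b}" "(g has_integral integral {a..b} g) {a<..<b}"
    using assms(1,2) has_integral_Icc_iff_Ioo by blast+
  then show ?thesis
    using integral_norm_bound_integral[of f "{a<..<b}" g] assms(3) by (auto simp: integral_unique)
qed

lemma norm_integral_le_const_Ioo:
  fixes f :: "real \<Rightarrow> 'a::banach"
  assumes "f integrable_on {a..b}" "a \<le> b" "\<And>x. x \<in> {a<..<b} \<Longrightarrow> norm (f x) \<le> c"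
  shows "norm (integral {a..b} f) \<le> c * (b - a)"
  using norm_integral_le_integral_Ioo[OF assms(1) integrable_const_ivl assms(3)] assms(2)
  by (simp add: mult.commute)

lemma integrable_continuous_mult_nonneg:
  fixes \<phi> g :: "real \<Rightarrow> real"
  assumes "continuous_on {a..b} \<phi>" "g integrable_on {a..b}" "\<And>x. x \<in> {a<..<b} \<Longrightarrow> 0 \<le> g x"
  shows "(\<lambda>x. \<phi> x * g x) integrable_on {a..b}"
proof -
  have "g absolutely_integrable_on {a<..<b}"
    using assms(2,3) by (intro nonnegative_absolutely_integrable_1) (auto simp: integrable_on_Icc_iff_Ioo)
  moreover have "\<phi> \<in> borel_measurable (lebesgue_on {a<..<b})"
    using assms(1) by (intro continuous_imp_measurable_on_sets_lebesgue) (auto elim: continuous_on_subset)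
  moreover have "bounded (\<phi> ` {a<..<b})"
    using compact_imp_bounded[OF compact_continuous_image[OF assms(1) compact_Icc]]
    by (rule bounded_subset) auto
  ultimately have "(\<lambda>x. \<phi> x * g x) absolutely_integrable_on {a<..<b}"
    by (intro absolutely_integrable_bounded_measurable_product_real) auto
  then show ?thesis
    by (simp add: integrable_on_Icc_iff_Ioo set_lebesgue_integral_eq_integral(1))
qed

lemma abs_ln_le_of_bounds:
  fixes y lo hi :: real
  assumes "0 < lo" "lo \<le> y" "y \<le> hi"
  shows "\<bar>ln y\<bar> \<le> \<bar>ln lo\<bar> + \<bar>ln hi\<bar>"
proof -
  have "ln lo \<le> ln y" "ln y \<le> ln hi" using assms by simp_all
  then show ?thesis by linarith
qed

lemma x_ln_one_div_le_one:
  fixes x :: real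
  assumes "0 < x"
  shows "x * ln (1 / x) \<le> 1"
proof -
  have "x * ln (1 / x) \<le> x * (1 / x - 1)"
    using assms by (intro mult_left_mono ln_le_minus_one) auto
  also have "\<dots> = 1 - x"
    using assms by (simp add: field_simps)
  finally show ?thesis
    using assms by simp
qed

lemma tendsto_const_div_ln_one_div: "((\<lambda>x::real. K / ln (1 / x)) \<longlongrightarrow> 0) (at_right 0)"
proof -
  have "filterlim (\<lambda>x::real. ln (1 / x)) at_top (at_right 0)"
    by (rule filterlim_compose[OF ln_at_top]) (simp add: filterlim_inverse_at_top_right flip: inverse_eq_divide)
  then show ?thesis
    by (intro tendsto_divide_0[OF tendsto_const] filterlim_at_top_imp_at_infinity)
qed

lemma filterlim_at_right_within_quadrant:
  "filterlim fst (at_right 0) (at (0::real, 0::real) within {p. 0 < fst p \<and> 0 < snd p})"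
  "filterlim snd (at_right 0) (at (0::real, 0::real) within {p. 0 < fst p \<and> 0 < snd p})"
proof -
  have "eventually (\<lambda>p. 0 < fst p \<and> 0 < snd p) (at (0::real, 0::real) within {p. 0 < fst p \<and> 0 < snd p})"
    by (simp add: eventually_at_filter)
  moreover have "(fst \<longlongrightarrow> 0) (at (0::real, 0::real) within {p. 0 < fst p \<and> 0 < snd p})"
    "(snd \<longlongrightarrow> 0) (at (0::real, 0::real) within {p. 0 < fst p \<and> 0 < snd p})"
    using tendsto_fst[OF tendsto_ident_at] tendsto_snd[OF tendsto_ident_at] by fastforce+
  ultimately show "filterlim fst (at_right 0) (at (0::real, 0::real) within {p. 0 < fst p \<and> 0 < snd p})"
    "filterlim snd (at_right 0) (at (0::real, 0::real) within {p. 0 < fst p \<and> 0 < snd p})"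
    by (auto intro!: tendsto_imp_filterlim_at_right elim: eventually_mono)
qed

lemma split_along_xlnx:
  fixes E :: "'a::real_normed_field"
  assumes s: "0 < s" "s < 1" and t: "0 < t" "t < 1" and E_le: "norm E \<le> K * (s + t)"
  defines "e1 \<equiv> E / of_real ((s + t) * ln (1 / s))" and "e2 \<equiv> E / of_real ((s + t) * ln (1 / t))"
  shows "norm e1 \<le> K / ln (1 / s)" "norm e2 \<le> K / ln (1 / t)"
    and "E = e1 * of_real (s * ln (1 / s)) + e2 * of_real (t * ln (1 / t))"
proof -
  have ln: "0 < ln (1 / s)" "0 < ln (1 / t)"
    using s t by simp_all
  have div_le: "norm E / ((s + t) * L) \<le> K / L" if "0 < L" for L
  proof -
    have "norm E / ((s + t) * L) \<le> K * (s + t) / ((s + t) * L)"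
      using E_le s t that by (intro divide_right_mono) auto
    also have "\<dots> = K / L"
      using s t by simp
    finally show ?thesis .
  qed
  have "0 < (s + t) * ln (1 / s)" "0 < (s + t) * ln (1 / t)"
    using s t ln by simp_all
  then have "norm e1 = norm E / ((s + t) * ln (1 / s))" "norm e2 = norm E / ((s + t) * ln (1 / t))"
    by (simp_all only: e1_def e2_def norm_divide norm_of_real abs_of_pos)
  then show "norm e1 \<le> K / ln (1 / s)" "norm e2 \<le> K / ln (1 / t)"
    using div_le ln by simp_all
  have "s / (s + t) = s * ln (1 / s) / ((s + t) * ln (1 / s))"
       "t / (s + t) = t * ln (1 / t) / ((s + t) * ln (1 / t))"
    using ln by simp_all
  then have "e1 * of_real (s * ln (1 / s)) + e2 * of_real (t * ln (1 / t)) = E * of_real (s / (s + t) + t / (s + t))"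
    unfolding e1_def e2_def of_real_add distrib_left
    by (simp only: of_real_divide times_divide_eq_left times_divide_eq_right)
  also have "s / (s + t) + t / (s + t) = 1"
    using s t by (simp add: add_divide_distrib[symmetric])
  finally show "E = e1 * of_real (s * ln (1 / s)) + e2 * of_real (t * ln (1 / t))"
    by simp
qed

lemma bigo_sum_as_small_xlnx_terms:
  fixes E :: "real \<times> real \<Rightarrow> 'a::real_normed_field"
  assumes fst: "filterlim fst (at_right 0) F" and snd: "filterlim snd (at_right 0) F"
    and bound: "eventually (\<lambda>p. norm (E p) \<le> K * (fst p + snd p)) F"
  shows "\<exists>e1 e2. (e1 \<longlongrightarrow> 0) F \<and> (e2 \<longlongrightarrow> 0) F \<and>
    eventually (\<lambda>p. E p = e1 p * of_real (fst p * ln (1 / fst p)) + e2 p * of_real (snd p * ln (1 / snd p))) F"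
proof -
  define e1 where "e1 p = E p / of_real ((fst p + snd p) * ln (1 / fst p))" for p
  define e2 where "e2 p = E p / of_real ((fst p + snd p) * ln (1 / snd p))" for p
  have unit: "eventually (\<lambda>x. 0 < x \<and> x < 1) (at_right (0::real))"
    by (auto simp: eventually_at_right_field intro!: exI[of _ 1])
  have "eventually (\<lambda>p. 0 < fst p \<and> fst p < 1) F" "eventually (\<lambda>p. 0 < snd p \<and> snd p < 1) F"
    using eventually_compose_filterlim[OF unit fst] eventually_compose_filterlim[OF unit snd] by simp_all
  then have "eventually (\<lambda>p. (0 < fst p \<and> fst p < 1) \<and> (0 < snd p \<and> snd p < 1)) F"
    by (rule eventually_conj)
  moreover have "norm (e1 p) \<le> K / ln (1 / fst p) \<and> norm (e2 p) \<le> K / ln (1 / snd p)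
      \<and> E p = e1 p * of_real (fst p * ln (1 / fst p)) + e2 p * of_real (snd p * ln (1 / snd p))"
    if "(0 < fst p \<and> fst p < 1) \<and> (0 < snd p \<and> snd p < 1)" "norm (E p) \<le> K * (fst p + snd p)" for p
    using split_along_xlnx[of "fst p" "snd p" "E p" K] that unfolding e1_def e2_def by auto
  ultimately have ev: "eventually (\<lambda>p. norm (e1 p) \<le> K / ln (1 / fst p) \<and> norm (e2 p) \<le> K / ln (1 / snd p)
      \<and> E p = e1 p * of_real (fst p * ln (1 / fst p)) + e2 p * of_real (snd p * ln (1 / snd p))) F"
    using bound by (auto elim: eventually_elim2)
  have "(e1 \<longlongrightarrow> 0) F"
    using ev by (intro Lim_null_comparison[OF _ filterlim_compose[OF tendsto_const_div_ln_one_div fst]])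
      (auto elim: eventually_mono)
  moreover have "(e2 \<longlongrightarrow> 0) F"
    using ev by (intro Lim_null_comparison[OF _ filterlim_compose[OF tendsto_const_div_ln_one_div snd]])
      (auto elim: eventually_mono)
  moreover have "eventually (\<lambda>p. E p = e1 p * of_real (fst p * ln (1 / fst p)) + e2 p * of_real (snd p * ln (1 / snd p))) F"
    using ev by eventually_elim simp
  ultimately show ?thesis by blast
qed

definition left_factor :: "real \<Rightarrow> real \<Rightarrow> real \<Rightarrow> real" where
  "left_factor c s x = sqrt (x - c + s) / sqrt (x - c)"

definition right_factor :: "real \<Rightarrow> real \<Rightarrow> real \<Rightarrow> real" where
  "right_factor d t x = sqrt (d - t - x) / sqrt (d - x)"

lemma left_factor_bounds:
  assumes "c < x" "0 \<le> s"
  shows "1 \<le> left_factor c s x" "left_factor c s x - 1 \<le> s / (2 * (x - c))"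
proof -
  define p q where "p = sqrt (x - c)" and "q = sqrt (x - c + s)"
  have pq: "0 < p" "p \<le> q" "p^2 = x - c" "q^2 = x - c + s"
    using assms by (simp_all add: p_def q_def)
  show "1 \<le> left_factor c s x"
    using pq by (simp add: left_factor_def flip: p_def q_def)
  have "(q^2 - p^2) / (2 * p^2) - (q / p - 1) = (q - p)^2 / (2 * p^2)"
    using pq by (simp add: field_simps power2_eq_square)
  then have "q / p - 1 \<le> (q^2 - p^2) / (2 * p^2)"
    by (smt (verit) divide_nonneg_nonneg zero_le_power2)
  then show "left_factor c s x - 1 \<le> s / (2 * (x - c))"
    using pq by (simp add: left_factor_def flip: p_def q_def)
qed

lemma right_factor_bounds:
  assumes "0 \<le> t" "t < d - x"
  shows "0 \<le> right_factor d t x" "right_factor d t x \<le> 1" "1 - right_factor d t x \<le> t / (d - x)"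
proof -
  define p q where "p = sqrt (d - x)" and "q = sqrt (d - t - x)"
  have pq: "0 < p" "0 \<le> q" "q \<le> p" "p^2 = d - x" "q^2 = d - t - x"
    using assms by (simp_all add: p_def q_def)
  show "0 \<le> right_factor d t x" "right_factor d t x \<le> 1"
    using pq by (simp_all add: right_factor_def flip: p_def q_def)
  have "(p^2 - q^2) / p^2 - (1 - q / p) = q * (p - q) / p^2"
    using pq by (simp add: field_simps power2_eq_square)
  then have "1 - q / p \<le> (p^2 - q^2) / p^2"
    using pq by (smt (verit) divide_nonneg_nonneg mult_nonneg_nonneg zero_le_power2)
  then show "1 - right_factor d t x \<le> t / (d - x)"
    using pq by (simp add: right_factor_def flip: p_def q_def)
qed

lemma has_real_derivative_left_antiderivative:
  assumes "0 < s" "c < x"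
  shows "((\<lambda>x. sqrt (x - c) * sqrt (x - c + s) + s * ln (sqrt (x - c) + sqrt (x - c + s)) - x)
     has_real_derivative left_factor c s x - 1) (at x)"
proof -
  define p q where "p = sqrt (x - c)" and "q = sqrt (x - c + s)"
  have pq: "0 < p" "0 < q" and s_eq: "s = q * q - p * p"
    using assms by (simp_all add: p_def q_def)
  have "s = (q - p) * (p + q)"
    unfolding s_eq by (simp add: algebra_simps)
  then have "s * (1 / (2 * p) + 1 / (2 * q)) / (p + q) = (q - p) * (1 / (2 * p) + 1 / (2 * q))"
    using pq by simp
  moreover have "q / (2 * p) + p / (2 * q) + (q - p) * (1 / (2 * p) + 1 / (2 * q)) = q / p"
    using pq by (simp add: field_simps)
  ultimately have "q / (2 * p) + p / (2 * q) + s * (1 / (2 * p) + 1 / (2 * q)) / (p + q) = q / p"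
    by simp
  then show ?thesis
    unfolding left_factor_def
    using assms pq
    by (auto intro!: derivative_eq_intros simp flip: p_def q_def) (simp add: inverse_eq_divide ac_simps)
qed

lemma has_real_derivative_right_antiderivative:
  assumes "0 < t" "x < d - t"
  shows "((\<lambda>x. t * ln (sqrt (d - x) + sqrt (d - t - x)) - sqrt (d - x) * sqrt (d - t - x) - x)
     has_real_derivative right_factor d t x - 1) (at x)"
proof -
  define p q where "p = sqrt (d - x)" and "q = sqrt (d - t - x)"
  have pq: "0 < p" "0 < q" "0 < p + q" and t_eq: "t = (p - q) * (p + q)"
    using assms by (simp_all add: p_def q_def algebra_simps add_pos_pos)
  then have "t * (- (1 / (2 * p)) - 1 / (2 * q)) / (p + q) = (p - q) * (- (1 / (2 * p)) - 1 / (2 * q))"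
    by simp
  moreover have "q / (2 * p) + p / (2 * q) + (p - q) * (- (1 / (2 * p)) - 1 / (2 * q)) = q / p"
    using pq by (simp add: field_simps)
  ultimately have "q / (2 * p) + p / (2 * q) + t * (- (1 / (2 * p)) - 1 / (2 * q)) / (p + q) = q / p"
    by simp
  then show ?thesis
    unfolding right_factor_def using assms pq
    by (auto intro!: derivative_eq_intros simp flip: p_def q_def) (simp add: inverse_eq_divide ac_simps)
qed

lemma has_integral_left_factor:
  assumes "0 < s" "c < d"
  shows "((\<lambda>x. left_factor c s x - 1) has_integral
     s / 2 * ln (1 / s) + (sqrt (d - c) * sqrt (d - c + s) - (d - c) + s * ln (sqrt (d - c) + sqrt (d - c + s)))) {c..d}"
proof -
  define F where "F x = sqrt (x - c) * sqrt (x - c + s) + s * ln (sqrt (x - c) + sqrt (x - c + s)) - x" for x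
  have pos: "0 < sqrt (x - c) + sqrt (x - c + s)" if "c \<le> x" for x
    using assms that by (simp add: add_nonneg_pos)
  have "continuous_on {c..d} F"
    unfolding F_def using pos by (intro continuous_intros) (simp_all add: order.strict_implies_not_eq[symmetric])
  moreover have "(F has_vector_derivative left_factor c s x - 1) (at x)" if "x \<in> {c<..<d}" for x
    using has_real_derivative_left_antiderivative[of s c x] assms that
    unfolding F_def has_real_derivative_iff_has_vector_derivative by simp
  ultimately have "((\<lambda>x. left_factor c s x - 1) has_integral F d - F c) {c..d}"
    using assms by (intro fundamental_theorem_of_calculus_interior) auto
  \<comment> \<open>the logarithmic term is the boundary value \<open>F c = s * ln (sqrt s) - c\<close>\<close>
  moreover have "F d - F c = s / 2 * ln (1 / s) + (sqrt (d - c) * sqrt (d - c + s) - (d - c) + s * ln (sqrt (d - c) + sqrt (d - c + s)))"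
    using assms by (simp add: F_def ln_sqrt ln_div algebra_simps)
  ultimately show ?thesis by simp
qed

lemma has_integral_right_factor:
  assumes "0 < t" "c < d - t"
  shows "((\<lambda>x. right_factor d t x - 1) has_integral
     - (t / 2 * ln (1 / t)) + (t + sqrt (d - c) * sqrt (d - c - t) - (d - c) - t * ln (sqrt (d - c) + sqrt (d - c - t)))) {c..d - t}"
proof -
  define G where "G x = t * ln (sqrt (d - x) + sqrt (d - t - x)) - sqrt (d - x) * sqrt (d - t - x) - x" for x
  have pos: "0 < sqrt (d - x) + sqrt (d - t - x)" if "x \<le> d - t" for x
    using assms that by (simp add: add_pos_nonneg)
  have "continuous_on {c..d - t} G"
    unfolding G_def using pos by (intro continuous_intros) (simp_all add: order.strict_implies_not_eq[symmetric])
  moreover have "(G has_vector_derivative right_factor d t x - 1) (at x)" if "x \<in> {c<..<d - t}" for x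
    using has_real_derivative_right_antiderivative[of t x d] assms that
    unfolding G_def has_real_derivative_iff_has_vector_derivative by simp
  ultimately have "((\<lambda>x. right_factor d t x - 1) has_integral G (d - t) - G c) {c..d - t}"
    using assms by (intro fundamental_theorem_of_calculus_interior) auto
  moreover have "G (d - t) - G c = - (t / 2 * ln (1 / t)) + (t + sqrt (d - c) * sqrt (d - c - t) - (d - c) - t * ln (sqrt (d - c) + sqrt (d - c - t)))"
    using assms by (simp add: G_def ln_sqrt ln_div algebra_simps)
  ultimately show ?thesis by simp
qed

lemma left_remainder_bound:
  assumes "0 < s" "0 < l"
  shows "\<bar>sqrt l * sqrt (l + s) - l + s * ln (sqrt l + sqrt (l + s))\<bar>
    \<le> s * (1 / 2 + \<bar>ln (sqrt l + sqrt (l + s))\<bar>)"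
proof -
  define p q where "p = sqrt l" and "q = sqrt (l + s)"
  have pq: "0 < p" "p \<le> q" "p^2 = l" "q^2 = l + s"
    using assms by (simp_all add: p_def q_def)
  have "0 \<le> (q - p)^2" by simp
  then have "0 \<le> p * q - l" "p * q - l \<le> s / 2"
    using pq by (auto simp: power2_eq_square algebra_simps)
  moreover have "\<bar>s * ln (p + q)\<bar> = s * \<bar>ln (p + q)\<bar>"
    using assms by (simp add: abs_mult)
  ultimately show ?thesis
    unfolding p_def q_def by (simp add: algebra_simps)
qed

lemma right_remainder_bound:
  assumes "0 < t" "t < l"
  shows "\<bar>t + sqrt l * sqrt (l - t) - l - t * ln (sqrt l + sqrt (l - t))\<bar>
    \<le> t * (1 + \<bar>ln (sqrt l + sqrt (l - t))\<bar>)"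
proof -
  define p q where "p = sqrt l" and "q = sqrt (l - t)"
  have pq: "0 < q" "q \<le> p" "p^2 = l" "q^2 = l - t"
    using assms by (simp_all add: p_def q_def)
  have "q * q \<le> p * q" "p * q \<le> p * p"
    using pq by (simp_all add: mult_right_mono mult_left_mono)
  moreover have "l = p * p" "t = p * p - q * q"
    using pq by (simp_all add: power2_eq_square)
  ultimately have "0 \<le> t + p * q - l" "t + p * q - l \<le> t"
    by linarith+
  moreover have "\<bar>t * ln (p + q)\<bar> = t * \<bar>ln (p + q)\<bar>"
    using assms by (simp add: abs_mult)
  ultimately show ?thesis
    unfolding p_def q_def by (simp add: algebra_simps)
qed

lemma psqrt_of_pos: "0 < y \<Longrightarrow> psqrt y = of_real (sqrt y)"
  by (simp add: psqrt_def csqrt_of_real)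

lemma psqrt_of_neg: "y < 0 \<Longrightarrow> psqrt y = \<i> * of_real (sqrt (- y))"
  by (simp add: psqrt_def csqrt_of_real')

locale branch_points =
  fixes \<xi>1 \<xi>2 \<xi>3 :: real
  assumes order: "-1 < \<xi>1" "\<xi>1 < \<xi>2" "\<xi>2 < \<xi>3" "\<xi>3 < 1"
begin

abbreviation Q :: "real \<Rightarrow> real \<Rightarrow> complex" where
  "Q \<equiv> Qfun \<xi>1 \<xi>2 \<xi>3"

definition weight :: "real \<Rightarrow> real" where
  "weight x = 1 / (sqrt (1 - x) * sqrt (1 + x) * sqrt (\<xi>3 - x))"

lemma weight_pos: "x \<in> {\<xi>1..\<xi>2} \<Longrightarrow> 0 < weight x"
  using order by (simp add: weight_def)

lemma continuous_on_weight: "continuous_on {\<xi>1..\<xi>2} weight"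
  unfolding weight_def using order by (intro continuous_intros) auto

lemma weight_bounded: "\<exists>H. \<forall>x\<in>{\<xi>1..\<xi>2}. weight x \<le> H"
proof -
  obtain B where "\<forall>y\<in>weight ` {\<xi>1..\<xi>2}. norm y \<le> B"
    using compact_imp_bounded[OF compact_continuous_image[OF continuous_on_weight compact_Icc]]
    unfolding bounded_iff by blast
  then show ?thesis
    by (intro exI[of _ B]) auto
qed

lemma weight_lipschitz: "\<exists>L. L-lipschitz_on {\<xi>1..\<xi>2} weight"
proof -
  define P where "P x = (1 - x) * (1 + x) * (\<xi>3 - x)" for x
  define P' where "P' x = (1 - x) * (\<xi>3 - x) - (1 + x) * (\<xi>3 - x) - (1 - x) * (1 + x)" for x
  have P_pos: "0 < P x" if "x \<in> {\<xi>1..\<xi>2}" for x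
    using order that by (simp add: P_def)
  have weight_eq: "weight = (\<lambda>x. 1 / sqrt (P x))"
    by (simp add: fun_eq_iff weight_def P_def real_sqrt_mult)
  have deriv: "((\<lambda>x. 1 / sqrt (P x)) has_real_derivative - (P' x / (2 * P x * sqrt (P x)))) (at x)"
    if "x \<in> {\<xi>1..\<xi>2}" for x
    using P_pos[OF that] unfolding P_def P'_def
    by (auto intro!: derivative_eq_intros simp: field_simps)
  have cont: "continuous_on {\<xi>1..\<xi>2} (\<lambda>x. - (P' x / (2 * P x * sqrt (P x))))"
    using P_pos order unfolding P_def P'_def by (intro continuous_intros) auto
  show ?thesis
    unfolding weight_eq by (rule lipschitz_on_if_continuous_derivative[OF deriv cont])
qed

lemma gfun_eq:
  assumes "0 \<le> s" "0 \<le> t" "\<xi>1 < x" "x < \<xi>2 - t"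
  shows "gfun \<xi>1 \<xi>2 \<xi>3 s t x = - of_real (weight x * left_factor \<xi>1 s x * right_factor \<xi>2 t x)"
proof -
  have "gfun \<xi>1 \<xi>2 \<xi>3 s t x = of_real (sqrt (x - \<xi>1 + s)) * (\<i> * of_real (sqrt (\<xi>2 - t - x))) /
     ((\<i> * of_real (sqrt (1 - x))) * of_real (sqrt (x + 1)) * of_real (sqrt (x - \<xi>1))
       * (\<i> * of_real (sqrt (\<xi>2 - x))) * (\<i> * of_real (sqrt (\<xi>3 - x))))"
    unfolding gfun_def using assms order by (simp add: psqrt_of_pos psqrt_of_neg)
  moreover have "0 < sqrt (1 - x)" "0 < sqrt (x + 1)" "0 < sqrt (x - \<xi>1)" "0 < sqrt (\<xi>2 - x)" "0 < sqrt (\<xi>3 - x)"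
    using assms order by auto
  ultimately show ?thesis
    by (simp add: weight_def left_factor_def right_factor_def field_simps add.commute)
qed

lemma Qfun_eqI:
  assumes "0 \<le> s" "0 \<le> t"
    and "((\<lambda>x. weight x * left_factor \<xi>1 s x * right_factor \<xi>2 t x) has_integral v) {\<xi>1..\<xi>2 - t}"
  shows "Q s t = of_real v"
proof -
  have int: "((\<lambda>x. - complex_of_real (weight x * left_factor \<xi>1 s x * right_factor \<xi>2 t x))
      has_integral - complex_of_real v) {\<xi>1..\<xi>2 - t}"
    by (rule has_integral_neg[OF has_integral_of_real[OF assms(3)]])
  have eq: "gfun \<xi>1 \<xi>2 \<xi>3 s t x = - of_real (weight x * left_factor \<xi>1 s x * right_factor \<xi>2 t x)"
    if "x \<in> {\<xi>1..\<xi>2 - t} - {\<xi>1, \<xi>2 - t}" for x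
    using assms that by (intro gfun_eq) auto
  have "(gfun \<xi>1 \<xi>2 \<xi>3 s t has_integral - of_real v) {\<xi>1..\<xi>2 - t}"
    using has_integral_spike_finite[of "{\<xi>1, \<xi>2 - t}", OF _ eq int] by simp
  then show ?thesis
    by (simp add: Qfun_def integral_unique)
qed

lemma Qfun_0_0: "Q 0 0 = of_real (integral {\<xi>1..\<xi>2} weight)"
proof (rule Qfun_eqI[OF order_refl order_refl])
  have int: "(weight has_integral integral {\<xi>1..\<xi>2} weight) {\<xi>1..\<xi>2 - 0}"
    using integrable_integral[OF integrable_continuous_interval[OF continuous_on_weight]] by simp
  have eq: "weight x * left_factor \<xi>1 0 x * right_factor \<xi>2 0 x = weight x"
    if "x \<in> {\<xi>1..\<xi>2 - 0} - {\<xi>1, \<xi>2}" for x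
    using that by (simp add: left_factor_def right_factor_def)
  show "((\<lambda>x. weight x * left_factor \<xi>1 0 x * right_factor \<xi>2 0 x)
      has_integral integral {\<xi>1..\<xi>2} weight) {\<xi>1..\<xi>2 - 0}"
    using has_integral_spike_finite[of "{\<xi>1, \<xi>2}", OF _ eq int] by simp
qed

text \<open>A common bound for the logarithms in the remainders of the two explicit integrals.\<close>

definition log_const :: real where
  "log_const = \<bar>ln (sqrt ((\<xi>2 - \<xi>1) / 2))\<bar> + \<bar>ln (2 * sqrt (\<xi>2 - \<xi>1 + 1))\<bar>"

lemma log_const_nonneg: "0 \<le> log_const"
  by (simp add: log_const_def)

lemma abs_ln_le_log_const:
  assumes "sqrt ((\<xi>2 - \<xi>1) / 2) \<le> y" "y \<le> 2 * sqrt (\<xi>2 - \<xi>1 + 1)"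
  shows "\<bar>ln y\<bar> \<le> log_const"
  unfolding log_const_def using assms order by (intro abs_ln_le_of_bounds) auto

end

locale branch_points_weight_bounds = branch_points +
  fixes H Lh :: real
  assumes weight_le: "\<And>x. x \<in> {\<xi>1..\<xi>2} \<Longrightarrow> weight x \<le> H"
    and lipschitz_weight: "Lh-lipschitz_on {\<xi>1..\<xi>2} weight"
begin

lemma abs_weight_diff_le: "x \<in> {\<xi>1..\<xi>2} \<Longrightarrow> y \<in> {\<xi>1..\<xi>2} \<Longrightarrow> \<bar>weight x - weight y\<bar> \<le> Lh * \<bar>x - y\<bar>"
  using lipschitz_onD[OF lipschitz_weight] by (simp add: dist_real_def)

lemma weight_bound_nonneg: "0 \<le> H"
  using weight_le[of \<xi>1] weight_pos[of \<xi>1] order by force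

context
  fixes s t :: real
  assumes s: "0 < s" "s \<le> 1" and t: "0 < t" "t \<le> (\<xi>2 - \<xi>1) / 2"
begin

lemma factor_bounds:
  assumes "x \<in> {\<xi>1<..<\<xi>2 - t}"
  shows "x \<in> {\<xi>1..\<xi>2}" "0 \<le> left_factor \<xi>1 s x - 1" "left_factor \<xi>1 s x - 1 \<le> s / (2 * (x - \<xi>1))"
    "0 \<le> right_factor \<xi>2 t x" "right_factor \<xi>2 t x \<le> 1" "1 - right_factor \<xi>2 t x \<le> t / (\<xi>2 - x)"
  using assms s t left_factor_bounds[of \<xi>1 x s] right_factor_bounds[of t \<xi>2 x] by auto

lemma continuous_on_right_factor: "continuous_on {\<xi>1..\<xi>2 - t} (right_factor \<xi>2 t)"
  unfolding right_factor_def[abs_def] using t by (intro continuous_intros) auto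

lemma continuous_on_weight_domain: "continuous_on {\<xi>1..\<xi>2 - t} weight"
  using continuous_on_weight by (rule continuous_on_subset) (use t in auto)

lemma has_integral_left_factor_domain:
  "\<exists>R. ((\<lambda>x. left_factor \<xi>1 s x - 1) has_integral s / 2 * ln (1 / s) + R) {\<xi>1..\<xi>2 - t}
     \<and> \<bar>R\<bar> \<le> (1 / 2 + log_const) * s"
proof -
  define l where "l = \<xi>2 - t - \<xi>1"
  have l: "(\<xi>2 - \<xi>1) / 2 \<le> l" "l + s \<le> \<xi>2 - \<xi>1 + 1"
    using s t by (simp_all add: l_def)
  have "\<bar>ln (sqrt l + sqrt (l + s))\<bar> \<le> log_const"
  proof (rule abs_ln_le_log_const)
    have "sqrt ((\<xi>2 - \<xi>1) / 2) \<le> sqrt l" "sqrt l \<le> sqrt (l + s)" "sqrt (l + s) \<le> sqrt (\<xi>2 - \<xi>1 + 1)"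
      using l s by simp_all
    moreover have "0 \<le> sqrt l"
      using l order by simp
    ultimately show "sqrt ((\<xi>2 - \<xi>1) / 2) \<le> sqrt l + sqrt (l + s)"
      and "sqrt l + sqrt (l + s) \<le> 2 * sqrt (\<xi>2 - \<xi>1 + 1)"
      by linarith+
  qed
  then have "s * (1 / 2 + \<bar>ln (sqrt l + sqrt (l + s))\<bar>) \<le> (1 / 2 + log_const) * s"
    using s by (simp add: mult.commute mult_left_mono)
  moreover have "0 < l"
    using l order by simp
  ultimately have "\<bar>sqrt l * sqrt (l + s) - l + s * ln (sqrt l + sqrt (l + s))\<bar> \<le> (1 / 2 + log_const) * s"
    using left_remainder_bound[of s l] s by linarith
  moreover have "((\<lambda>x. left_factor \<xi>1 s x - 1) has_integral
      s / 2 * ln (1 / s) + (sqrt l * sqrt (l + s) - l + s * ln (sqrt l + sqrt (l + s)))) {\<xi>1..\<xi>2 - t}"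
    unfolding l_def using has_integral_left_factor[of s \<xi>1 "\<xi>2 - t"] s t order by simp
  ultimately show ?thesis
    by blast
qed

lemma has_integral_right_factor_domain:
  "\<exists>R. ((\<lambda>x. right_factor \<xi>2 t x - 1) has_integral - (t / 2 * ln (1 / t)) + R) {\<xi>1..\<xi>2 - t}
     \<and> \<bar>R\<bar> \<le> (1 + log_const) * t"
proof -
  define l where "l = \<xi>2 - \<xi>1"
  have l: "0 < l" "t < l"
    using t order by (simp_all add: l_def)
  have "\<bar>ln (sqrt l + sqrt (l - t))\<bar> \<le> log_const"
  proof (rule abs_ln_le_log_const)
    have "sqrt ((\<xi>2 - \<xi>1) / 2) \<le> sqrt l" "sqrt (l - t) \<le> sqrt l" "sqrt l \<le> sqrt (\<xi>2 - \<xi>1 + 1)"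
      using l t by (simp_all add: l_def)
    moreover have "0 \<le> sqrt (l - t)"
      using l by simp
    ultimately show "sqrt ((\<xi>2 - \<xi>1) / 2) \<le> sqrt l + sqrt (l - t)"
      and "sqrt l + sqrt (l - t) \<le> 2 * sqrt (\<xi>2 - \<xi>1 + 1)"
      by linarith+
  qed
  then have "t * (1 + \<bar>ln (sqrt l + sqrt (l - t))\<bar>) \<le> (1 + log_const) * t"
    using t by (simp add: mult.commute mult_left_mono)
  then have "\<bar>t + sqrt l * sqrt (l - t) - l - t * ln (sqrt l + sqrt (l - t))\<bar> \<le> (1 + log_const) * t"
    using right_remainder_bound[of t l] t l by linarith
  moreover have "((\<lambda>x. right_factor \<xi>2 t x - 1) has_integral
      - (t / 2 * ln (1 / t)) + (t + sqrt l * sqrt (l - t) - l - t * ln (sqrt l + sqrt (l - t)))) {\<xi>1..\<xi>2 - t}"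
    unfolding l_def using has_integral_right_factor[of t \<xi>1 \<xi>2] t order by simp
  ultimately show ?thesis
    by blast
qed

lemma weight_left_factor_le:
  assumes "x \<in> {\<xi>1<..<\<xi>2 - t}"
  shows "norm ((weight x - weight \<xi>1) * (left_factor \<xi>1 s x - 1)) \<le> Lh * s / 2"
proof -
  have "\<bar>weight x - weight \<xi>1\<bar> \<le> Lh * (x - \<xi>1)"
    using abs_weight_diff_le[of x \<xi>1] factor_bounds(1)[OF assms] assms order by simp
  then have "norm ((weight x - weight \<xi>1) * (left_factor \<xi>1 s x - 1)) \<le> Lh * (x - \<xi>1) * (s / (2 * (x - \<xi>1)))"
    unfolding real_norm_def abs_mult using factor_bounds[OF assms] by (intro mult_mono) auto
  also have "\<dots> = Lh * s / 2"
    using assms by (simp add: field_simps)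
  finally show ?thesis .
qed

lemma weight_right_factor_le:
  assumes "x \<in> {\<xi>1<..<\<xi>2 - t}"
  shows "norm ((weight x - weight \<xi>2) * (right_factor \<xi>2 t x - 1)) \<le> Lh * t"
proof -
  have "\<bar>weight x - weight \<xi>2\<bar> \<le> Lh * (\<xi>2 - x)"
    using abs_weight_diff_le[of x \<xi>2] factor_bounds(1)[OF assms] assms order by simp
  moreover have "\<bar>right_factor \<xi>2 t x - 1\<bar> \<le> t / (\<xi>2 - x)"
    using factor_bounds[OF assms] by simp
  ultimately have "norm ((weight x - weight \<xi>2) * (right_factor \<xi>2 t x - 1)) \<le> Lh * (\<xi>2 - x) * (t / (\<xi>2 - x))"
    unfolding real_norm_def abs_mult by (intro mult_mono) auto
  also have "\<dots> = Lh * t"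
    using assms t by (simp add: field_simps)
  finally show ?thesis .
qed

lemma has_integral_weight_left:
  "\<exists>E. ((\<lambda>x. weight x * (left_factor \<xi>1 s x - 1)) has_integral weight \<xi>1 * (s / 2 * ln (1 / s)) + E)
       {\<xi>1..\<xi>2 - t}
     \<and> \<bar>E\<bar> \<le> (H * (1 / 2 + log_const) + Lh * (\<xi>2 - \<xi>1) / 2) * s"
proof -
  obtain R where R: "((\<lambda>x. left_factor \<xi>1 s x - 1) has_integral s / 2 * ln (1 / s) + R) {\<xi>1..\<xi>2 - t}"
    and R_le: "\<bar>R\<bar> \<le> (1 / 2 + log_const) * s"
    using has_integral_left_factor_domain by blast
  define E1 where "E1 = integral {\<xi>1..\<xi>2 - t} (\<lambda>x. (weight x - weight \<xi>1) * (left_factor \<xi>1 s x - 1))"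
  have "(\<lambda>x. (weight x - weight \<xi>1) * (left_factor \<xi>1 s x - 1)) integrable_on {\<xi>1..\<xi>2 - t}"
    using R factor_bounds continuous_on_weight_domain
    by (intro integrable_continuous_mult_nonneg continuous_intros) auto
  then have E1: "((\<lambda>x. (weight x - weight \<xi>1) * (left_factor \<xi>1 s x - 1)) has_integral E1) {\<xi>1..\<xi>2 - t}"
    unfolding E1_def by (rule integrable_integral)
  have "\<bar>E1\<bar> \<le> Lh * s / 2 * (\<xi>2 - t - \<xi>1)"
    using norm_integral_le_const_Ioo[OF has_integral_integrable[OF E1] _ weight_left_factor_le] t order
    unfolding integral_unique[OF E1] by simp
  also have "\<dots> \<le> Lh * s / 2 * (\<xi>2 - \<xi>1)"
    using t s lipschitz_on_nonneg[OF lipschitz_weight] by (intro mult_left_mono) auto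
  finally have E1_le: "\<bar>E1\<bar> \<le> Lh * s / 2 * (\<xi>2 - \<xi>1)" .
  have "\<bar>weight \<xi>1 * R\<bar> \<le> H * ((1 / 2 + log_const) * s)"
    unfolding abs_mult using R_le weight_pos[of \<xi>1] weight_le[of \<xi>1] order by (intro mult_mono) auto
  moreover have "(H * (1 / 2 + log_const) + Lh * (\<xi>2 - \<xi>1) / 2) * s
      = H * ((1 / 2 + log_const) * s) + Lh * s / 2 * (\<xi>2 - \<xi>1)"
    by (simp add: algebra_simps)
  ultimately have "\<bar>weight \<xi>1 * R + E1\<bar> \<le> (H * (1 / 2 + log_const) + Lh * (\<xi>2 - \<xi>1) / 2) * s"
    using E1_le abs_triangle_ineq[of "weight \<xi>1 * R" E1] by linarith
  moreover have "((\<lambda>x. weight \<xi>1 * (left_factor \<xi>1 s x - 1) + (weight x - weight \<xi>1) * (left_factor \<xi>1 s x - 1))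
      has_integral weight \<xi>1 * (s / 2 * ln (1 / s) + R) + E1) {\<xi>1..\<xi>2 - t}"
    by (intro has_integral_add has_integral_mult_right R E1)
  ultimately show ?thesis
    by (intro exI[of _ "weight \<xi>1 * R + E1"]) (simp add: algebra_simps)
qed

lemma has_integral_weight_right:
  "\<exists>E. ((\<lambda>x. weight x * (right_factor \<xi>2 t x - 1)) has_integral - (weight \<xi>2 * (t / 2 * ln (1 / t))) + E)
       {\<xi>1..\<xi>2 - t}
     \<and> \<bar>E\<bar> \<le> (H * (1 + log_const) + Lh * (\<xi>2 - \<xi>1)) * t"
proof -
  obtain R where R: "((\<lambda>x. right_factor \<xi>2 t x - 1) has_integral - (t / 2 * ln (1 / t)) + R) {\<xi>1..\<xi>2 - t}"
    and R_le: "\<bar>R\<bar> \<le> (1 + log_const) * t"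
    using has_integral_right_factor_domain by blast
  define E2 where "E2 = integral {\<xi>1..\<xi>2 - t} (\<lambda>x. (weight x - weight \<xi>2) * (right_factor \<xi>2 t x - 1))"
  have "(\<lambda>x. (weight x - weight \<xi>2) * (right_factor \<xi>2 t x - 1)) integrable_on {\<xi>1..\<xi>2 - t}"
    using continuous_on_weight_domain continuous_on_right_factor
    by (intro integrable_continuous_interval continuous_intros)
  then have E2: "((\<lambda>x. (weight x - weight \<xi>2) * (right_factor \<xi>2 t x - 1)) has_integral E2) {\<xi>1..\<xi>2 - t}"
    unfolding E2_def by (rule integrable_integral)
  have "\<bar>E2\<bar> \<le> Lh * t * (\<xi>2 - t - \<xi>1)"
    using norm_integral_le_const_Ioo[OF has_integral_integrable[OF E2] _ weight_right_factor_le] t order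
    unfolding integral_unique[OF E2] by simp
  also have "\<dots> \<le> Lh * t * (\<xi>2 - \<xi>1)"
    using t lipschitz_on_nonneg[OF lipschitz_weight] by (intro mult_left_mono) auto
  finally have E2_le: "\<bar>E2\<bar> \<le> Lh * t * (\<xi>2 - \<xi>1)" .
  have "\<bar>weight \<xi>2 * R\<bar> \<le> H * ((1 + log_const) * t)"
    unfolding abs_mult using R_le weight_pos[of \<xi>2] weight_le[of \<xi>2] order by (intro mult_mono) auto
  moreover have "(H * (1 + log_const) + Lh * (\<xi>2 - \<xi>1)) * t = H * ((1 + log_const) * t) + Lh * t * (\<xi>2 - \<xi>1)"
    by (simp add: algebra_simps)
  ultimately have "\<bar>weight \<xi>2 * R + E2\<bar> \<le> (H * (1 + log_const) + Lh * (\<xi>2 - \<xi>1)) * t"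
    using E2_le abs_triangle_ineq[of "weight \<xi>2 * R" E2] by linarith
  moreover have "((\<lambda>x. weight \<xi>2 * (right_factor \<xi>2 t x - 1) + (weight x - weight \<xi>2) * (right_factor \<xi>2 t x - 1))
      has_integral weight \<xi>2 * (- (t / 2 * ln (1 / t)) + R) + E2) {\<xi>1..\<xi>2 - t}"
    by (intro has_integral_add has_integral_mult_right R E2)
  ultimately show ?thesis
    by (intro exI[of _ "weight \<xi>2 * R + E2"]) (simp add: algebra_simps)
qed

lemma left_right_product_le:
  assumes "x \<in> {\<xi>1<..<\<xi>2 - t}"
  shows "(left_factor \<xi>1 s x - 1) * (1 - right_factor \<xi>2 t x)
    \<le> 2 * t / (\<xi>2 - \<xi>1) * (left_factor \<xi>1 s x - 1) + s / (\<xi>2 - \<xi>1)"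
proof (cases "x - \<xi>1 \<le> (\<xi>2 - \<xi>1) / 2")
  case True
  have "t / (\<xi>2 - x) \<le> t / ((\<xi>2 - \<xi>1) / 2)"
    using True assms t order by (intro divide_left_mono) auto
  also have "\<dots> = 2 * t / (\<xi>2 - \<xi>1)"
    by simp
  finally have "1 - right_factor \<xi>2 t x \<le> 2 * t / (\<xi>2 - \<xi>1)"
    using factor_bounds(6)[OF assms] by linarith
  then have "(left_factor \<xi>1 s x - 1) * (1 - right_factor \<xi>2 t x) \<le> (left_factor \<xi>1 s x - 1) * (2 * t / (\<xi>2 - \<xi>1))"
    using factor_bounds(2)[OF assms] by (rule mult_left_mono)
  then have "(left_factor \<xi>1 s x - 1) * (1 - right_factor \<xi>2 t x) \<le> 2 * t / (\<xi>2 - \<xi>1) * (left_factor \<xi>1 s x - 1)"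
    by (metis mult.commute)
  moreover have "0 \<le> s / (\<xi>2 - \<xi>1)"
    using s order by simp
  ultimately show ?thesis
    by linarith
next
  case False
  have "s / (2 * (x - \<xi>1)) \<le> s / (\<xi>2 - \<xi>1)"
    using False assms s order by (intro divide_left_mono) auto
  then have "left_factor \<xi>1 s x - 1 \<le> s / (\<xi>2 - \<xi>1)"
    using factor_bounds(3)[OF assms] by linarith
  moreover have "(left_factor \<xi>1 s x - 1) * (1 - right_factor \<xi>2 t x) \<le> left_factor \<xi>1 s x - 1"
    using factor_bounds[OF assms] by (intro mult_left_le) auto
  moreover have "0 \<le> 2 * t / (\<xi>2 - \<xi>1) * (left_factor \<xi>1 s x - 1)"
    using factor_bounds[OF assms] t order by simp
  ultimately show ?thesis
    by linarith
qed

lemma weight_cross_le: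
  assumes "x \<in> {\<xi>1<..<\<xi>2 - t}"
  shows "norm (weight x * (left_factor \<xi>1 s x - 1) * (right_factor \<xi>2 t x - 1))
    \<le> H * (2 * t / (\<xi>2 - \<xi>1) * (left_factor \<xi>1 s x - 1) + s / (\<xi>2 - \<xi>1))"
proof -
  have "norm (weight x * (left_factor \<xi>1 s x - 1) * (right_factor \<xi>2 t x - 1))
      = weight x * ((left_factor \<xi>1 s x - 1) * (1 - right_factor \<xi>2 t x))"
    using factor_bounds[OF assms] weight_pos[OF factor_bounds(1)[OF assms]] by (simp add: abs_mult)
  also have "\<dots> \<le> H * (2 * t / (\<xi>2 - \<xi>1) * (left_factor \<xi>1 s x - 1) + s / (\<xi>2 - \<xi>1))"
    using left_right_product_le[OF assms] factor_bounds[OF assms] weight_le[OF factor_bounds(1)[OF assms]]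
      weight_bound_nonneg
    by (intro mult_mono) auto
  finally show ?thesis .
qed

lemma has_integral_weight_cross:
  "\<exists>E. ((\<lambda>x. weight x * (left_factor \<xi>1 s x - 1) * (right_factor \<xi>2 t x - 1)) has_integral E)
       {\<xi>1..\<xi>2 - t}
     \<and> \<bar>E\<bar> \<le> H * s + 2 * H * (1 + log_const) / (\<xi>2 - \<xi>1) * t"
proof -
  define D where "D = \<xi>2 - \<xi>1"
  have D: "0 < D" "t \<le> D"
    using order t by (simp_all add: D_def)
  obtain R where R: "((\<lambda>x. left_factor \<xi>1 s x - 1) has_integral s / 2 * ln (1 / s) + R) {\<xi>1..\<xi>2 - t}"
    and R_le: "\<bar>R\<bar> \<le> (1 / 2 + log_const) * s"
    using has_integral_left_factor_domain by blast
  have "(1 / 2 + log_const) * s \<le> 1 / 2 + log_const"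
    using s log_const_nonneg by (intro mult_left_le) auto
  then have IA_le: "s / 2 * ln (1 / s) + R \<le> 1 + log_const"
    using x_ln_one_div_le_one[OF s(1)] R_le by linarith
  have "(\<lambda>x. (weight x * (right_factor \<xi>2 t x - 1)) * (left_factor \<xi>1 s x - 1)) integrable_on {\<xi>1..\<xi>2 - t}"
    using R factor_bounds continuous_on_weight_domain continuous_on_right_factor
    by (intro integrable_continuous_mult_nonneg continuous_intros) auto
  then have int: "(\<lambda>x. weight x * (left_factor \<xi>1 s x - 1) * (right_factor \<xi>2 t x - 1)) integrable_on {\<xi>1..\<xi>2 - t}"
    by (simp add: ac_simps)
  have "((\<lambda>x. s / D) has_integral (\<xi>2 - t - \<xi>1) * (s / D)) {\<xi>1..\<xi>2 - t}"
    using has_integral_const_real[of "s / D" \<xi>1 "\<xi>2 - t"] D by (simp add: D_def)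
  then have bound: "((\<lambda>x. H * (2 * t / D * (left_factor \<xi>1 s x - 1) + s / D)) has_integral
      H * (2 * t / D * (s / 2 * ln (1 / s) + R) + (\<xi>2 - t - \<xi>1) * (s / D))) {\<xi>1..\<xi>2 - t}"
    by (intro has_integral_mult_right has_integral_add R)
  have "norm (integral {\<xi>1..\<xi>2 - t} (\<lambda>x. weight x * (left_factor \<xi>1 s x - 1) * (right_factor \<xi>2 t x - 1)))
      \<le> H * (2 * t / D * (s / 2 * ln (1 / s) + R) + (\<xi>2 - t - \<xi>1) * (s / D))"
    unfolding integral_unique[OF bound, symmetric]
    by (intro norm_integral_le_integral_Ioo int has_integral_integrable[OF bound])
      (unfold D_def, erule weight_cross_le)
  also have "\<dots> \<le> H * (2 * t / D * (1 + log_const) + s)"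
  proof -
    have "(\<xi>2 - t - \<xi>1) * (s / D) \<le> s"
      using D s t by (simp add: D_def field_simps)
    moreover have "2 * t / D * (s / 2 * ln (1 / s) + R) \<le> 2 * t / D * (1 + log_const)"
      using IA_le D t by (intro mult_left_mono) auto
    ultimately show ?thesis
      using weight_bound_nonneg by (intro mult_left_mono) auto
  qed
  also have "\<dots> = H * s + 2 * H * (1 + log_const) / (\<xi>2 - \<xi>1) * t"
    by (simp add: D_def algebra_simps)
  finally show ?thesis
    using int by (auto intro: integrable_integral)
qed

lemma Qfun_diff_eq:
  "Q s t - Q 0 0 = of_real
     (integral {\<xi>1..\<xi>2 - t} (\<lambda>x. weight x * (left_factor \<xi>1 s x - 1))
    + integral {\<xi>1..\<xi>2 - t} (\<lambda>x. weight x * (right_factor \<xi>2 t x - 1))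
    + integral {\<xi>1..\<xi>2 - t} (\<lambda>x. weight x * (left_factor \<xi>1 s x - 1) * (right_factor \<xi>2 t x - 1))
    - integral {\<xi>2 - t..\<xi>2} weight)"
proof -
  have "weight integrable_on {\<xi>1..\<xi>2 - t}"
    using continuous_on_weight_domain by (rule integrable_continuous_interval)
  moreover have "(\<lambda>x. weight x * (left_factor \<xi>1 s x - 1)) integrable_on {\<xi>1..\<xi>2 - t}"
    "(\<lambda>x. weight x * (right_factor \<xi>2 t x - 1)) integrable_on {\<xi>1..\<xi>2 - t}"
    "(\<lambda>x. weight x * (left_factor \<xi>1 s x - 1) * (right_factor \<xi>2 t x - 1)) integrable_on {\<xi>1..\<xi>2 - t}"
    using has_integral_weight_left has_integral_weight_right has_integral_weight_cross by blast+
  ultimately have "((\<lambda>x. weight x + weight x * (left_factor \<xi>1 s x - 1) + weight x * (right_factor \<xi>2 t x - 1)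
        + weight x * (left_factor \<xi>1 s x - 1) * (right_factor \<xi>2 t x - 1)) has_integral
      integral {\<xi>1..\<xi>2 - t} weight
      + integral {\<xi>1..\<xi>2 - t} (\<lambda>x. weight x * (left_factor \<xi>1 s x - 1))
      + integral {\<xi>1..\<xi>2 - t} (\<lambda>x. weight x * (right_factor \<xi>2 t x - 1))
      + integral {\<xi>1..\<xi>2 - t} (\<lambda>x. weight x * (left_factor \<xi>1 s x - 1) * (right_factor \<xi>2 t x - 1)))
      {\<xi>1..\<xi>2 - t}"
    by (intro has_integral_add integrable_integral)
  moreover have "(\<lambda>x. weight x + weight x * (left_factor \<xi>1 s x - 1) + weight x * (right_factor \<xi>2 t x - 1)
        + weight x * (left_factor \<xi>1 s x - 1) * (right_factor \<xi>2 t x - 1))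
      = (\<lambda>x. weight x * left_factor \<xi>1 s x * right_factor \<xi>2 t x)"
    by (simp add: fun_eq_iff algebra_simps)
  ultimately have "Q s t = of_real (integral {\<xi>1..\<xi>2 - t} weight
      + integral {\<xi>1..\<xi>2 - t} (\<lambda>x. weight x * (left_factor \<xi>1 s x - 1))
      + integral {\<xi>1..\<xi>2 - t} (\<lambda>x. weight x * (right_factor \<xi>2 t x - 1))
      + integral {\<xi>1..\<xi>2 - t} (\<lambda>x. weight x * (left_factor \<xi>1 s x - 1) * (right_factor \<xi>2 t x - 1)))"
    using s t by (intro Qfun_eqI) auto
  moreover have "integral {\<xi>1..\<xi>2} weight = integral {\<xi>1..\<xi>2 - t} weight + integral {\<xi>2 - t..\<xi>2} weight"
    using t order by (intro Henstock_Kurzweil_Integration.integral_combine[symmetric]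
        integrable_continuous_interval continuous_on_weight) auto
  ultimately show ?thesis
    unfolding Qfun_0_0 of_real_diff[symmetric] by simp
qed

end

lemma Qfun_expansion:
  "\<exists>K. \<forall>s t. 0 < s \<longrightarrow> s \<le> 1 \<longrightarrow> 0 < t \<longrightarrow> t \<le> (\<xi>2 - \<xi>1) / 2 \<longrightarrow>
     norm (Q s t - Q 0 0 - of_real (weight \<xi>1 / 2 * (s * ln (1 / s)) - weight \<xi>2 / 2 * (t * ln (1 / t))))
       \<le> K * (s + t)"
proof -
  define A where "A = H * (1 / 2 + log_const) + Lh * (\<xi>2 - \<xi>1) / 2 + H"
  define B where "B = H * (1 + log_const) + Lh * (\<xi>2 - \<xi>1) + 2 * H * (1 + log_const) / (\<xi>2 - \<xi>1) + H"
  have AB: "0 \<le> A" "0 \<le> B"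
    using weight_bound_nonneg lipschitz_on_nonneg[OF lipschitz_weight] log_const_nonneg order
    by (auto simp: A_def B_def)
  have "norm (Q s t - Q 0 0 - of_real (weight \<xi>1 / 2 * (s * ln (1 / s)) - weight \<xi>2 / 2 * (t * ln (1 / t))))
       \<le> (A + B) * (s + t)"
    if s: "0 < s" "s \<le> 1" and t: "0 < t" "t \<le> (\<xi>2 - \<xi>1) / 2" for s t
  proof -
    obtain E1 where E1: "((\<lambda>x. weight x * (left_factor \<xi>1 s x - 1)) has_integral weight \<xi>1 * (s / 2 * ln (1 / s)) + E1)
         {\<xi>1..\<xi>2 - t}" and E1_le: "\<bar>E1\<bar> \<le> (H * (1 / 2 + log_const) + Lh * (\<xi>2 - \<xi>1) / 2) * s"
      using has_integral_weight_left[OF s t] by blast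
    obtain E2 where E2: "((\<lambda>x. weight x * (right_factor \<xi>2 t x - 1)) has_integral - (weight \<xi>2 * (t / 2 * ln (1 / t))) + E2)
         {\<xi>1..\<xi>2 - t}" and E2_le: "\<bar>E2\<bar> \<le> (H * (1 + log_const) + Lh * (\<xi>2 - \<xi>1)) * t"
      using has_integral_weight_right[OF s t] by blast
    obtain E3 where E3: "((\<lambda>x. weight x * (left_factor \<xi>1 s x - 1) * (right_factor \<xi>2 t x - 1)) has_integral E3)
         {\<xi>1..\<xi>2 - t}" and E3_le: "\<bar>E3\<bar> \<le> H * s + 2 * H * (1 + log_const) / (\<xi>2 - \<xi>1) * t"
      using has_integral_weight_cross[OF s t] by blast
    have "norm (integral {\<xi>2 - t..\<xi>2} weight) \<le> H * (\<xi>2 - (\<xi>2 - t))"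
      using t order weight_le
      by (intro norm_integral_le_const_Ioo integrable_continuous_interval
          continuous_on_subset[OF continuous_on_weight]) (auto simp: abs_of_pos weight_pos)
    then have tail_le: "\<bar>integral {\<xi>2 - t..\<xi>2} weight\<bar> \<le> H * t"
      by simp
    have eq: "Q s t - Q 0 0 - of_real (weight \<xi>1 / 2 * (s * ln (1 / s)) - weight \<xi>2 / 2 * (t * ln (1 / t)))
        = of_real (E1 + E2 + E3 - integral {\<xi>2 - t..\<xi>2} weight)"
      unfolding Qfun_diff_eq[OF s t] integral_unique[OF E1] integral_unique[OF E2] integral_unique[OF E3]
      by (simp flip: of_real_diff add: algebra_simps)
    have "A * s + B * t \<le> (A + B) * (s + t)"
      using AB s t by (simp add: algebra_simps)
    moreover have "A * s + B * t = (H * (1 / 2 + log_const) + Lh * (\<xi>2 - \<xi>1) / 2) * s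
        + (H * (1 + log_const) + Lh * (\<xi>2 - \<xi>1)) * t + (H * s + 2 * H * (1 + log_const) / (\<xi>2 - \<xi>1) * t) + H * t"
      by (simp add: A_def B_def algebra_simps)
    ultimately show ?thesis
      unfolding eq norm_of_real using E1_le E2_le E3_le tail_le by linarith
  qed
  then show ?thesis
    by blast
qed

lemma Qfun_asymptotics:
  defines "F \<equiv> at (0::real, 0::real) within {p. 0 < fst p \<and> 0 < snd p}"
  shows "\<exists>e1 e2. (e1 \<longlongrightarrow> 0) F \<and> (e2 \<longlongrightarrow> 0) F \<and>
    eventually (\<lambda>p. Q (fst p) (snd p) - Q 0 0
      - of_real (weight \<xi>1 / 2 * (fst p * ln (1 / fst p)) - weight \<xi>2 / 2 * (snd p * ln (1 / snd p)))
      = e1 p * of_real (fst p * ln (1 / fst p)) + e2 p * of_real (snd p * ln (1 / snd p))) F"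
proof -
  obtain K where K: "\<And>s t. 0 < s \<Longrightarrow> s \<le> 1 \<Longrightarrow> 0 < t \<Longrightarrow> t \<le> (\<xi>2 - \<xi>1) / 2 \<Longrightarrow>
      norm (Q s t - Q 0 0 - of_real (weight \<xi>1 / 2 * (s * ln (1 / s)) - weight \<xi>2 / 2 * (t * ln (1 / t))))
        \<le> K * (s + t)"
    using Qfun_expansion by blast
  note fst = filterlim_at_right_within_quadrant(1)[folded F_def]
    and snd = filterlim_at_right_within_quadrant(2)[folded F_def]
  have near_0: "eventually (\<lambda>x. 0 < x \<and> x \<le> c) (at_right (0::real))" if "0 < c" for c
    using that by (auto simp: eventually_at_right_field intro!: exI[of _ c])
  have "eventually (\<lambda>p. 0 < fst p \<and> fst p \<le> 1) F"
    by (rule eventually_compose_filterlim[OF near_0 fst]) simp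
  moreover have "eventually (\<lambda>p. 0 < snd p \<and> snd p \<le> (\<xi>2 - \<xi>1) / 2) F"
    by (rule eventually_compose_filterlim[OF near_0 snd]) (use order in simp)
  ultimately have "eventually (\<lambda>p. (0 < fst p \<and> fst p \<le> 1) \<and> (0 < snd p \<and> snd p \<le> (\<xi>2 - \<xi>1) / 2)) F"
    by (rule eventually_conj)
  then have "eventually (\<lambda>p. norm (Q (fst p) (snd p) - Q 0 0 - of_real (weight \<xi>1 / 2 * (fst p * ln (1 / fst p))
      - weight \<xi>2 / 2 * (snd p * ln (1 / snd p)))) \<le> K * (fst p + snd p)) F"
    by eventually_elim (rule K, auto)
  then show ?thesis
    by (rule bigo_sum_as_small_xlnx_terms[OF fst snd])
qed

end

theorem proposition4p5:
  fixes \<xi>1 \<xi>2 \<xi>3 :: real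
  assumes "-1 < \<xi>1" and "\<xi>1 < \<xi>2" and "\<xi>2 < \<xi>3" and "\<xi>3 < 1"
  defines "F \<equiv> at (0::real, 0::real) within {p. fst p > 0 \<and> snd p > 0}"
  shows "\<exists>e1 e2 e3 e4 :: real \<times> real \<Rightarrow> complex.
     (e1 \<longlongrightarrow> 0) F \<and> (e2 \<longlongrightarrow> 0) F \<and>
     (\<exists>C. eventually (\<lambda>(s,t). norm (e3 (s,t)) \<le> C * t) F) \<and>
     (\<exists>C. eventually (\<lambda>(s,t). norm (e4 (s,t)) * ln (1/s) \<le> C) F) \<and>
     eventually (\<lambda>(s,t).
        Qfun \<xi>1 \<xi>2 \<xi>3 s t - Qfun \<xi>1 \<xi>2 \<xi>3 0 0 =
          complex_of_real (-1 / (2 * sqrt (1 - \<xi>2) * sqrt (1 + \<xi>2) * sqrt (\<xi>3 - \<xi>2)) * (t * ln (1/t)))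
        + complex_of_real (1 / (2 * sqrt (1 - \<xi>1) * sqrt (1 + \<xi>1) * sqrt (\<xi>3 - \<xi>1)) * (s * ln (1/s)))
        + e1 (s,t) * complex_of_real (s * ln (1/s))
        + e2 (s,t) * complex_of_real (t * ln (1/t))
        + e3 (s,t) * complex_of_real (s * ln (1/s))
        + e4 (s,t) * complex_of_real (t * ln (1/t))) F"
proof -
  interpret branch_points \<xi>1 \<xi>2 \<xi>3
    using assms(1-4) by unfold_locales
  obtain H Lh where "\<forall>x\<in>{\<xi>1..\<xi>2}. weight x \<le> H" "Lh-lipschitz_on {\<xi>1..\<xi>2} weight"
    using weight_bounded weight_lipschitz by blast
  then interpret branch_points_weight_bounds \<xi>1 \<xi>2 \<xi>3 H Lh
    by unfold_locales auto
  obtain e1 e2 where lim: "(e1 \<longlongrightarrow> 0) F" "(e2 \<longlongrightarrow> 0) F"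
    and e12: "eventually (\<lambda>p. Q (fst p) (snd p) - Q 0 0
      - of_real (weight \<xi>1 / 2 * (fst p * ln (1 / fst p)) - weight \<xi>2 / 2 * (snd p * ln (1 / snd p)))
      = e1 p * of_real (fst p * ln (1 / fst p)) + e2 p * of_real (snd p * ln (1 / snd p))) F"
    using Qfun_asymptotics unfolding F_def by blast
  have coeffs: "-1 / (2 * sqrt (1 - \<xi>2) * sqrt (1 + \<xi>2) * sqrt (\<xi>3 - \<xi>2)) = - (weight \<xi>2 / 2)"
    "1 / (2 * sqrt (1 - \<xi>1) * sqrt (1 + \<xi>1) * sqrt (\<xi>3 - \<xi>1)) = weight \<xi>1 / 2"
    by (simp_all add: weight_def)
  have "eventually (\<lambda>(s, t). Q s t - Q 0 0 =
      of_real (- (weight \<xi>2 / 2) * (t * ln (1 / t))) + of_real (weight \<xi>1 / 2 * (s * ln (1 / s)))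
      + e1 (s, t) * of_real (s * ln (1 / s)) + e2 (s, t) * of_real (t * ln (1 / t))
      + 0 * of_real (s * ln (1 / s)) + 0 * of_real (t * ln (1 / t))) F"
    using e12 by (rule eventually_mono) (auto simp: algebra_simps)
  then show ?thesis
    unfolding coeffs
    by (intro exI[of _ e1] exI[of _ e2] exI[of _ "\<lambda>_. 0"] conjI lim)
      (auto simp: case_prod_unfold intro: exI[of _ "0::real"])
qed

end
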